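(* Let $\mathbf{F}$ be a $\pi$-tree on a topological space $X$ and let $\alpha:\omega\to\omega$ be strictly increasing. Then there is a $\pi$-tree $\mathbf{H}$ on $X$ such that $\alpha[\mathrm{rise}_{\mathbf{F}}(p,U)]\subseteq\mathrm{rise}_{\mathbf{H}}(p,U)$ for all $p\in X$ and all neighbourhoods $U$ of $p$ in $X$.
   Context: Neighbourhoods are not necessarily open. $\omega=\{0,1,2,\dots\}$, ${}^{<\omega}\omega$ is the set of finite sequences of natural numbers. A tree is a strict partial order in which the set of predecessors of every node is well-ordered; $\mathrm{height}(x)$ is the ordinal isomorphic to the set of predecessors of $x$; a branch is a maximal chain; $\mathrm{sons}(x)$ is the set of immediate successors of $x$; $0$ denotes the least node. A foliage tree is a pair $\mathbf{F}=(T,l)$ with $T$ a tree (skeleton) and $l$ a function on its nodes, $\mathbf{F}_x:=l(x)$; tree notions apply via the skeleton. $\mathrm{shoot}_{\mathbf{F}}(v)=\{\bigcup_{x\in C}\mathbf{F}_x: C\text{ a cofinite subset of }\mathrm{sons}_{\mathbf{F}}(v)\}$; $\mathrm{scope}_{\mathbf{F}}(p)=\{x:p\in\mathbf{F}_x\}$. For families $\gamma,\delta$ of sets, $\gamma\gg\delta$ means every nonempty $D\in\delta$ contains some nonempty $G\in\gamma$. $\mathrm{rise}_{\mathbf{F}}(p,U)=\{\mathrm{height}_{\mathbf{F}}(v): v\in\mathrm{scope}_{\mathbf{F}}(p),\ \mathrm{shoot}_{\mathbf{F}}(v)\gg\{U\}\}$. $\mathbf{F}$ is locally strict if each non-maximal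 leaf $\mathbf{F}_x$ is the disjoint union of $\mathbf{F}_s$, $s\in\mathrm{sons}(x)$; has strict branches if it has a node and for each branch $B$, $\bigcap_{x\in B}\mathbf{F}_x$ is a singleton; is open in $X$ if all leaves are open in $X$; is a foliage $\omega,\omega$-tree if its skeleton is order-isomorphic to $({}^{<\omega}\omega,\subsetneq)$. A Baire foliage tree on $X$ is an open in $X$, locally strict foliage $\omega,\omega$-tree with strict branches and $\mathbf{F}_{0_{\mathbf{F}}}=X$. $\mathbf{F}$ grows into $X$ if for every $p\in X$ and neighbourhood $U$ of $p$ there is $z\in\mathrm{scope}_{\mathbf{F}}(p)$ with $\mathrm{shoot}_{\mathbf{F}}(z)\gg\{U\}$. A $\pi$-tree on $X$ is a Baire foliage tree on $X$ that grows into $X$. *)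

theory Defs
  imports "HOL-Analysis.Analysis" "HOL-Library.Sublist"
begin

text \<open>A foliage omega,omega-tree is represented with its skeleton taken to be
  (nat list, strict prefix), i.e. the canonical copy of the finite sequences of
  natural numbers ordered by strict extension; the foliage is the labelling
  function F :: nat list => 'a set.  The root is the empty list, the height of
  a node is its length, and the sons of v are the lists v @ [n].\<close>

type_synonym 'a foliage = "nat list \<Rightarrow> 'a set"

definition sons :: "nat list \<Rightarrow> nat list set" where
  "sons v = {s. strict_prefix v s \<and> length s = Suc (length v)}"

definition height :: "nat list \<Rightarrow> nat" where
  "height v = card {u. strict_prefix u v}"

definition is_branch :: "nat list set \<Rightarrow> bool" where
  "is_branch B \<longleftrightarrow>
     (\<forall>x\<in>B. \<forall>y\<in>B. x = y \<or> strict_prefix x y \<or> strict_prefix y x) \<and>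
     (\<forall>C. B \<subseteq> C \<and> (\<forall>x\<in>C. \<forall>y\<in>C. x = y \<or> strict_prefix x y \<or> strict_prefix y x) \<longrightarrow> C = B)"

definition shoot :: "'a foliage \<Rightarrow> nat list \<Rightarrow> 'a set set" where
  "shoot F v = {\<Union>x\<in>C. F x | C. C \<subseteq> sons v \<and> finite (sons v - C)}"

definition scope :: "'a foliage \<Rightarrow> 'a \<Rightarrow> nat list set" where
  "scope F p = {x. p \<in> F x}"

definition refines :: "'a set set \<Rightarrow> 'a set set \<Rightarrow> bool" (infix "\<ggreater>" 50) where
  "\<gamma> \<ggreater> \<delta> \<longleftrightarrow> (\<forall>D\<in>\<delta>. D \<noteq> {} \<longrightarrow> (\<exists>G\<in>\<gamma>. G \<noteq> {} \<and> G \<subseteq> D))"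

definition rise :: "'a foliage \<Rightarrow> 'a \<Rightarrow> 'a set \<Rightarrow> nat set" where
  "rise F p U = {height v | v. v \<in> scope F p \<and> shoot F v \<ggreater> {U}}"

text \<open>Neighbourhoods need not be open.\<close>
definition nbhd :: "'a topology \<Rightarrow> 'a \<Rightarrow> 'a set \<Rightarrow> bool" where
  "nbhd X p U \<longleftrightarrow> U \<subseteq> topspace X \<and> (\<exists>V. openin X V \<and> p \<in> V \<and> V \<subseteq> U)"

definition locally_strict :: "'a foliage \<Rightarrow> bool" where
  "locally_strict F \<longleftrightarrow>
     (\<forall>x. F x = (\<Union>s\<in>sons x. F s) \<and>
          (\<forall>s\<in>sons x. \<forall>t\<in>sons x. s \<noteq> t \<longrightarrow> F s \<inter> F t = {}))"

definition strict_branches :: "'a foliage \<Rightarrow> bool" where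
  "strict_branches F \<longleftrightarrow> (\<forall>B. is_branch B \<longrightarrow> (\<exists>p. (\<Inter>x\<in>B. F x) = {p}))"

definition open_foliage :: "'a topology \<Rightarrow> 'a foliage \<Rightarrow> bool" where
  "open_foliage X F \<longleftrightarrow> (\<forall>x. openin X (F x))"

definition baire_foliage_tree :: "'a topology \<Rightarrow> 'a foliage \<Rightarrow> bool" where
  "baire_foliage_tree X F \<longleftrightarrow>
     open_foliage X F \<and> locally_strict F \<and> strict_branches F \<and> F [] = topspace X"

definition grows_into :: "'a topology \<Rightarrow> 'a foliage \<Rightarrow> bool" where
  "grows_into X F \<longleftrightarrow>
     (\<forall>p\<in>topspace X. \<forall>U. nbhd X p U \<longrightarrow> (\<exists>z\<in>scope F p. shoot F z \<ggreater> {U}))"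

definition pi_tree :: "'a topology \<Rightarrow> 'a foliage \<Rightarrow> bool" where
  "pi_tree X F \<longleftrightarrow> baire_foliage_tree X F \<and> grows_into X F"

end

theory Submission
  imports Defs "HOL-Library.Nat_Bijection"
begin

text \<open>The tree \<open>H\<close> is \<open>F\<close> slowed down so that level \<open>\<alpha> n\<close> of \<open>H\<close> plays the role of
  level \<open>n\<close> of \<open>F\<close>. A node of \<open>H\<close> remembers a node \<open>x\<close> of \<open>F\<close> and an injective enumeration of
  infinitely many sons of \<open>x\<close>; its leaf is the union of their leaves. At a level in the range of
  \<open>\<alpha>\<close> the sons of an \<open>H\<close>-node are these sons of \<open>x\<close> themselves; at the other levels the
  enumerated sons are split by the pairing function into infinitely many infinite blocks. So
  \<open>H\<close> stays locally strict and open, an \<open>H\<close>-branch runs through copies of the nodes of an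
  \<open>F\<close>-branch, and a node \<open>w\<close> of height \<open>n\<close> in the scope of \<open>p\<close> reappears at height \<open>\<alpha> n\<close> with
  its sons merely reindexed, which carries a shoot of \<open>w\<close> refining \<open>U\<close> over to \<open>H\<close>.\<close>

section \<open>Trees of finite sequences\<close>

lemma sons_eq: "sons v = range (\<lambda>n. v @ [n])"
proof -
  have "s \<in> sons v \<longleftrightarrow> (\<exists>n. s = v @ [n])" for s
  proof
    assume "s \<in> sons v"
    then obtain t where "s = v @ t" "length t = 1"
      unfolding sons_def by (auto simp: strict_prefix_def prefix_def)
    then show "\<exists>n. s = v @ [n]" by (cases t) auto
  qed (auto simp: sons_def strict_prefix_def)
  then show ?thesis by auto
qed

lemma height_eq_length: "height v = length v"
proof -
  have "{u. strict_prefix u v} = set (prefixes v) - {v}"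
    by (auto simp: strict_prefix_def)
  then show ?thesis unfolding height_def by (simp add: card_Diff_singleton)
qed

lemma locally_strict_iff:
  "locally_strict F \<longleftrightarrow>
     (\<forall>x. F x = (\<Union>n. F (x @ [n])) \<and> (\<forall>a b. a \<noteq> b \<longrightarrow> F (x @ [a]) \<inter> F (x @ [b]) = {}))"
proof -
  have "(\<forall>s\<in>range (\<lambda>n. x @ [n]). \<forall>t\<in>range (\<lambda>n. x @ [n]). s \<noteq> t \<longrightarrow> F s \<inter> F t = {}) \<longleftrightarrow>
        (\<forall>a b. a \<noteq> b \<longrightarrow> F (x @ [a]) \<inter> F (x @ [b]) = {})" for x
    by auto
  then show ?thesis unfolding locally_strict_def sons_eq by (simp add: image_image)
qed

lemma locally_strict_UN: "locally_strict F \<Longrightarrow> F x = (\<Union>n. F (x @ [n]))"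
  unfolding locally_strict_iff by blast

lemma locally_strict_disjoint: "locally_strict F \<Longrightarrow> a \<noteq> b \<Longrightarrow> F (x @ [a]) \<inter> F (x @ [b]) = {}"
  unfolding locally_strict_iff by blast

lemma locally_strict_UN_disjoint:
  assumes "locally_strict F" "A \<inter> B = {}"
  shows "(\<Union>a\<in>A. F (x @ [a])) \<inter> (\<Union>b\<in>B. F (x @ [b])) = {}"
proof (rule equals0I)
  fix p assume "p \<in> (\<Union>a\<in>A. F (x @ [a])) \<inter> (\<Union>b\<in>B. F (x @ [b]))"
  then obtain a b where "a \<in> A" "b \<in> B" "p \<in> F (x @ [a])" "p \<in> F (x @ [b])" by blast
  moreover have "a \<noteq> b" using assms(2) \<open>a \<in> A\<close> \<open>b \<in> B\<close> by blast
  ultimately show False using locally_strict_disjoint[OF assms(1), of a b x] by blast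
qed

lemma locally_strict_prefix_subset:
  assumes "locally_strict F" "prefix x y" shows "F y \<subseteq> F x"
proof -
  obtain u where "y = x @ u" using assms(2) by (auto simp: prefix_def)
  moreover have "F (x @ u) \<subseteq> F x" for u
  proof (induction u rule: rev_induct)
    case (snoc n u)
    then show ?case using locally_strict_UN[OF assms(1), of "x @ u"] by force
  qed simp
  ultimately show ?thesis by simp
qed

lemma locally_strict_level_unique:
  assumes "locally_strict F" "p \<in> F x" "p \<in> F y" "length x = length y"
  shows "x = y"
  using assms(2-4)
proof (induction x arbitrary: y rule: rev_induct)
  case (snoc a x)
  then obtain y' b where y: "y = y' @ [b]"
    by (metis length_0_conv snoc_eq_iff_butlast)
  have "F (x @ [a]) \<subseteq> F x" "F (y' @ [b]) \<subseteq> F y'"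
    by (simp_all add: locally_strict_prefix_subset[OF assms(1)])
  then have "x = y'"
    using snoc y by (intro snoc.IH) auto
  then show ?case
    using snoc.prems y locally_strict_disjoint[OF assms(1), of a b x] by auto
qed simp

lemma locally_strict_exists_level:
  assumes "locally_strict F" "p \<in> F []" shows "\<exists>s. length s = h \<and> p \<in> F s"
proof (induction h)
  case (Suc h)
  then obtain s where s: "length s = h" "p \<in> F s" by blast
  then obtain n where "p \<in> F (s @ [n])" using locally_strict_UN[OF assms(1), of s] by blast
  with s show ?case by (intro exI[of _ "s @ [n]"]) simp
qed (use assms in auto)

section \<open>Branches\<close>

lemma is_branch_iff_maximal_chain:
  "is_branch B \<longleftrightarrow>
     Complete_Partial_Order.chain prefix B \<and>
     (\<forall>C. B \<subseteq> C \<and> Complete_Partial_Order.chain prefix C \<longrightarrow> C = B)"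
proof -
  have "(\<forall>x\<in>C. \<forall>y\<in>C. x = y \<or> strict_prefix x y \<or> strict_prefix y x) \<longleftrightarrow>
        Complete_Partial_Order.chain prefix C" for C :: "nat list set"
    unfolding chain_def strict_prefix_def by (metis prefix_order.refl)
  then show ?thesis by (simp only: is_branch_def)
qed

lemma chain_prefix_length_unique:
  assumes "Complete_Partial_Order.chain prefix C" "x \<in> C" "y \<in> C" "length x = length y"
  shows "x = y"
  using chainD[OF assms(1-3)] assms(4) by (auto simp: prefix_def)

lemma prefix_chain_eq_map:
  assumes "\<And>m. length (z m) = m" and "\<And>m. prefix (z m) (z (Suc m))"
  shows "z m = map (\<lambda>i. z (Suc i) ! i) [0..<m]"
proof (induction m)
  case 0
  then show ?case using assms(1)[of 0] by simp
next
  case (Suc m)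
  obtain zs where zs: "z (Suc m) = z m @ zs" using assms(2) prefixE by blast
  then obtain a where "zs = [a]"
    using assms(1)[of m] assms(1)[of "Suc m"] by (auto simp: length_Suc_conv)
  then have "z (Suc m) = z m @ [z (Suc m) ! m]" using zs assms(1)[of m] by (simp add: nth_append)
  then show ?case using Suc by simp
qed

lemma prefix_map_upt: "i \<le> j \<Longrightarrow> prefix (map f [0..<i]) (map f [0..<j])"
proof -
  assume "i \<le> j"
  then have "[0..<j] = [0..<i] @ [i..<j]" using upt_add_eq_append[of 0 i "j - i"] by simp
  then show ?thesis by simp
qed

lemma is_branch_range_map: "is_branch (range (\<lambda>m. map f [0..<m]))" (is "is_branch (range ?y)")
proof -
  note prefix_map = prefix_map_upt[of _ _ f]
  have chain: "Complete_Partial_Order.chain prefix (range ?y)"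
  proof (rule chainI)
    fix u v assume "u \<in> range ?y" "v \<in> range ?y"
    then obtain i j where "u = ?y i" "v = ?y j" by blast
    then show "prefix u v \<or> prefix v u" using prefix_map nat_le_linear[of i j] by blast
  qed
  have "c \<in> range ?y" if "Complete_Partial_Order.chain prefix C" "range ?y \<subseteq> C" "c \<in> C" for C c
    using chain_prefix_length_unique[OF that(1) that(3), of "?y (length c)"] that(2) by auto
  with chain show ?thesis unfolding is_branch_iff_maximal_chain by blast
qed

lemma branch_insert:
  assumes "is_branch B" "\<And>y. y \<in> B \<Longrightarrow> prefix x y \<or> prefix y x"
  shows "x \<in> B"
proof -
  have chain: "Complete_Partial_Order.chain prefix B"
    using assms(1) unfolding is_branch_iff_maximal_chain by (rule conjunct1)
  have "Complete_Partial_Order.chain prefix (insert x B)"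
  proof (rule chainI)
    fix u v assume "u \<in> insert x B" "v \<in> insert x B"
    then consider "u = x" "v = x" | "u = x" "v \<in> B" | "u \<in> B" "v = x" | "u \<in> B" "v \<in> B"
      by blast
    then show "prefix u v \<or> prefix v u"
      by cases (use assms(2) chainD[OF chain, of u v] in auto)
  qed
  moreover have "\<forall>C. B \<subseteq> C \<and> Complete_Partial_Order.chain prefix C \<longrightarrow> C = B"
    using assms(1) unfolding is_branch_iff_maximal_chain by (rule conjunct2)
  ultimately have "insert x B = B" by blast
  then show ?thesis by blast
qed

lemma branch_prefix_closed:
  assumes "is_branch B" "b \<in> B" "prefix u b"
  shows "u \<in> B"
proof (rule branch_insert[OF assms(1)])
  fix y assume "y \<in> B"
  have "Complete_Partial_Order.chain prefix B"
    using assms(1) unfolding is_branch_iff_maximal_chain by (rule conjunct1)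
  then have "prefix b y \<or> prefix y b"
    using assms(2) \<open>y \<in> B\<close> by (rule chainD)
  then show "prefix u y \<or> prefix y u"
  proof
    assume "prefix b y"
    then show ?thesis using assms(3) prefix_order.order_trans by blast
  qed (rule prefix_same_cases[OF assms(3)])
qed

lemma branch_has_level:
  assumes "is_branch B" shows "\<exists>b\<in>B. length b = m"
proof (induction m)
  case 0
  have "[] \<in> B" by (rule branch_insert[OF assms]) simp
  then show ?case by auto
next
  case (Suc m)
  then obtain b where b: "b \<in> B" "length b = m" by blast
  have chain: "Complete_Partial_Order.chain prefix B"
    using assms unfolding is_branch_iff_maximal_chain by (rule conjunct1)
  show ?case
  proof (cases "\<exists>y\<in>B. strict_prefix b y")
    case True
    then obtain y where y: "y \<in> B" "strict_prefix b y" by blast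
    then have "take (Suc m) y \<in> B"
      using branch_prefix_closed[OF assms] take_is_prefix by blast
    moreover have "length (take (Suc m) y) = Suc m"
      using prefix_length_less[OF y(2)] b(2) by simp
    ultimately show ?thesis by blast
  next
    case False
    have "b @ [0] \<in> B"
    proof (rule branch_insert[OF assms])
      fix y assume "y \<in> B"
      then have "prefix y b"
        using False chainD[OF chain b(1) \<open>y \<in> B\<close>] by (auto simp: strict_prefix_def)
      then show "prefix (b @ [0]) y \<or> prefix y (b @ [0])" by simp
    qed
    then show ?thesis using b(2) by (intro bexI) auto
  qed
qed

lemma is_branch_iff_range_map: "is_branch B \<longleftrightarrow> (\<exists>f. B = range (\<lambda>m. map f [0..<m]))"
proof
  assume branch: "is_branch B"
  have chain: "Complete_Partial_Order.chain prefix B"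
    using branch unfolding is_branch_iff_maximal_chain by (rule conjunct1)
  obtain z where z: "\<And>m. z m \<in> B" and len: "\<And>m. length (z m) = m"
    using branch_has_level[OF branch] by metis
  have "take m (z (Suc m)) = z m" for m
    using branch_prefix_closed[OF branch z take_is_prefix] len
    by (intro chain_prefix_length_unique[OF chain _ z]) auto
  then have "prefix (z m) (z (Suc m))" for m by (metis take_is_prefix)
  then have "z = (\<lambda>m. map (\<lambda>i. z (Suc i) ! i) [0..<m])"
    using prefix_chain_eq_map[OF len] by blast
  moreover have "B = range z"
    using chain_prefix_length_unique[OF chain _ z] len z by (auto intro: range_eqI)
  ultimately show "\<exists>f. B = range (\<lambda>m. map f [0..<m])" by metis
qed (use is_branch_range_map in blast)

lemma strict_branches_nonempty:
  assumes "strict_branches F" shows "F x \<noteq> {}"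
proof -
  define f where "f i = (if i < length x then x ! i else 0)" for i
  have "x = map f [0..<length x]" unfolding f_def by (rule nth_equalityI) simp_all
  then have "x \<in> range (\<lambda>m. map f [0..<m])" by (rule range_eqI)
  moreover obtain p where "(\<Inter>z\<in>range (\<lambda>m. map f [0..<m]). F z) = {p}"
    using assms is_branch_range_map[of f] unfolding strict_branches_def by (elim allE impE) auto
  ultimately have "p \<in> F x" by (metis INT_D singletonI)
  then show ?thesis by blast
qed

section \<open>Shoots and rises\<close>

lemma shoot_eq_cofinite: "shoot F v = {(\<Union>n\<in>N. F (v @ [n])) | N. finite (- N)}"
proof -
  have inj: "inj (\<lambda>n. v @ [n])" by (simp add: inj_def)
  have "C \<subseteq> sons v \<and> finite (sons v - C) \<longleftrightarrow>
        (\<exists>N. C = (\<lambda>n. v @ [n]) ` N \<and> finite (- N))" for C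
  proof
    assume C: "C \<subseteq> sons v \<and> finite (sons v - C)"
    define N where "N = {n. v @ [n] \<in> C}"
    have "C = (\<lambda>n. v @ [n]) ` N" using C unfolding N_def sons_eq by auto
    moreover have "sons v - C = (\<lambda>n. v @ [n]) ` (- N)" unfolding N_def sons_eq by auto
    then have "finite (- N)" using C finite_imageD[OF _ inj_on_subset[OF inj]] by auto
    ultimately show "\<exists>N. C = (\<lambda>n. v @ [n]) ` N \<and> finite (- N)" by blast
  next
    assume "\<exists>N. C = (\<lambda>n. v @ [n]) ` N \<and> finite (- N)"
    then obtain N where "C = (\<lambda>n. v @ [n]) ` N" "finite (- N)" by blast
    moreover have "sons v - (\<lambda>n. v @ [n]) ` N = (\<lambda>n. v @ [n]) ` (- N)"
      unfolding sons_eq by auto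
    ultimately show "C \<subseteq> sons v \<and> finite (sons v - C)" unfolding sons_eq by auto
  qed
  then have "shoot F v = {(\<Union>x\<in>C. F x) | C. \<exists>N. C = (\<lambda>n. v @ [n]) ` N \<and> finite (- N)}"
    unfolding shoot_def by simp
  also have "\<dots> = {(\<Union>n\<in>N. F (v @ [n])) | N. finite (- N)}"
    by (auto simp: image_image) (metis image_image)
  finally show ?thesis .
qed

lemma refines_shoot_reindex:
  assumes "inj e" and H: "\<And>c. H (s @ [c]) = F (w @ [e c])"
    and nonempty: "\<And>x. F x \<noteq> {}" and "shoot F w \<ggreater> {U}"
  shows "shoot H s \<ggreater> {U}"
  unfolding refines_def
proof (intro ballI impI)
  fix D assume "D \<in> {U}" "D \<noteq> {}"
  then obtain G where "G \<in> shoot F w" "G \<subseteq> D"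
    using assms(4) unfolding refines_def by blast
  then obtain N where N: "finite (- N)" "(\<Union>n\<in>N. F (w @ [n])) \<subseteq> D"
    unfolding shoot_eq_cofinite by blast
  define M where "M = e -` N"
  have "- M = e -` (- N)" unfolding M_def by blast
  then have cofinite: "finite (- M)" using finite_vimageI[OF N(1) assms(1)] by simp
  then have "M \<noteq> {}" using infinite_UNIV_nat by (metis Compl_empty_eq)
  then obtain c where "c \<in> M" by blast
  have UN_eq: "(\<Union>c\<in>M. H (s @ [c])) = (\<Union>c\<in>M. F (w @ [e c]))" by (simp only: H)
  have "F (w @ [e c]) \<noteq> {}" by (rule nonempty)
  then have "(\<Union>c\<in>M. H (s @ [c])) \<noteq> {}" unfolding UN_eq using \<open>c \<in> M\<close> by blast
  moreover have "(\<Union>c\<in>M. H (s @ [c])) \<subseteq> D"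
  proof -
    have "(\<Union>c\<in>M. F (w @ [e c])) \<subseteq> (\<Union>n\<in>N. F (w @ [n]))"
    proof (rule UN_least)
      fix c assume "c \<in> M"
      then have "e c \<in> N" unfolding M_def by simp
      then show "F (w @ [e c]) \<subseteq> (\<Union>n\<in>N. F (w @ [n]))" by (rule UN_upper)
    qed
    then show ?thesis unfolding UN_eq using N(2) by (rule order_trans)
  qed
  moreover have "(\<Union>c\<in>M. H (s @ [c])) \<in> shoot H s"
    unfolding shoot_eq_cofinite by (intro CollectI exI[of _ M]) (simp add: cofinite)
  ultimately show "\<exists>G\<in>shoot H s. G \<noteq> {} \<and> G \<subseteq> D" by (intro bexI conjI)
qed

lemma grows_into_iff_rise:
  "grows_into X F \<longleftrightarrow> (\<forall>p\<in>topspace X. \<forall>U. nbhd X p U \<longrightarrow> rise F p U \<noteq> {})"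
  unfolding grows_into_def rise_def by blast

section \<open>The stretched foliage\<close>

text \<open>\<open>track \<alpha> s\<close> is the pair of the node \<open>anchor \<alpha> s\<close> of \<open>F\<close> and the enumeration \<open>code \<alpha> s\<close> of
  the indices of its sons still available at \<open>s\<close>; \<open>descend\<close> updates it along the son \<open>c\<close> at
  height \<open>h\<close>.\<close>

definition descend :: "(nat \<Rightarrow> nat) \<Rightarrow> nat \<Rightarrow> nat list \<times> (nat \<Rightarrow> nat) \<Rightarrow> nat \<Rightarrow> nat list \<times> (nat \<Rightarrow> nat)"
  where "descend \<alpha> h xe c =
    (if h \<in> range \<alpha> then (fst xe @ [snd xe c], id) else (fst xe, snd xe \<circ> (\<lambda>t. prod_encode (c, t))))"

definition track :: "(nat \<Rightarrow> nat) \<Rightarrow> nat list \<Rightarrow> nat list \<times> (nat \<Rightarrow> nat)"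
  where "track \<alpha> s = foldl (\<lambda>xe (h, c). descend \<alpha> h xe c) ([], id) (zip [0..<length s] s)"

abbreviation anchor :: "(nat \<Rightarrow> nat) \<Rightarrow> nat list \<Rightarrow> nat list"
  where "anchor \<alpha> s \<equiv> fst (track \<alpha> s)"

abbreviation code :: "(nat \<Rightarrow> nat) \<Rightarrow> nat list \<Rightarrow> nat \<Rightarrow> nat"
  where "code \<alpha> s \<equiv> snd (track \<alpha> s)"

lemma track_Nil [simp]: "track \<alpha> [] = ([], id)"
  by (simp add: track_def)

lemma track_snoc: "track \<alpha> (s @ [c]) = descend \<alpha> (length s) (track \<alpha> s) c"
  by (simp add: track_def)

lemma anchor_snoc:
  "anchor \<alpha> (s @ [c]) = (if length s \<in> range \<alpha> then anchor \<alpha> s @ [code \<alpha> s c] else anchor \<alpha> s)"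
  by (simp add: track_snoc descend_def)

lemma code_snoc:
  "code \<alpha> (s @ [c]) = (if length s \<in> range \<alpha> then id else code \<alpha> s \<circ> (\<lambda>t. prod_encode (c, t)))"
  by (simp add: track_snoc descend_def)

lemma inj_code: "inj (code \<alpha> s)"
proof (induction s rule: rev_induct)
  case (snoc c s)
  have "inj (\<lambda>t. prod_encode (c, t))" by (simp add: inj_def prod_encode_eq)
  with snoc.IH have "inj (code \<alpha> s \<circ> (\<lambda>t. prod_encode (c, t)))" by (rule inj_compose)
  then show ?case unfolding code_snoc by simp
qed simp

lemma prefix_anchor: "prefix s t \<Longrightarrow> prefix (anchor \<alpha> s) (anchor \<alpha> t)"
proof (induction t rule: rev_induct)
  case (snoc c t)
  show ?case
  proof (cases "s = t @ [c]")
    case False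
    then have "prefix (anchor \<alpha> s) (anchor \<alpha> t)" using snoc by simp
    moreover have "prefix (anchor \<alpha> t) (anchor \<alpha> (t @ [c]))" by (simp add: anchor_snoc)
    ultimately show ?thesis by (rule prefix_order.order_trans)
  qed simp
qed simp

lemma length_anchor: "length (anchor \<alpha> s) = card {h. h < length s \<and> h \<in> range \<alpha>}"
proof (induction s rule: rev_induct)
  case (snoc c s)
  have "{h. h < length (s @ [c]) \<and> h \<in> range \<alpha>} =
        (if length s \<in> range \<alpha> then insert (length s) else id) {h. h < length s \<and> h \<in> range \<alpha>}"
    by (cases "length s \<in> range \<alpha>") (auto simp: less_Suc_eq, metis rangeI)
  then show ?case using snoc by (simp add: anchor_snoc)
qed simp

lemma lift_levels_below:
  fixes \<alpha> :: "nat \<Rightarrow> nat"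
  assumes "strict_mono \<alpha>" shows "{h. h < \<alpha> n \<and> h \<in> range \<alpha>} = \<alpha> ` {..<n}"
  using strict_mono_less[OF assms] by auto

lemma length_anchor_lift_level:
  fixes \<alpha> :: "nat \<Rightarrow> nat"
  assumes "strict_mono \<alpha>" "length s = \<alpha> n" shows "length (anchor \<alpha> s) = n"
proof -
  have "inj \<alpha>" using assms(1) by (rule strict_mono_imp_inj_on)
  then show ?thesis
    unfolding length_anchor assms(2) lift_levels_below[OF assms(1)]
    by (simp add: card_image inj_on_subset)
qed

definition stretch :: "(nat \<Rightarrow> nat) \<Rightarrow> 'a foliage \<Rightarrow> 'a foliage"
  where "stretch \<alpha> F s = (\<Union>a\<in>range (code \<alpha> s). F (anchor \<alpha> s @ [a]))"

lemma stretch_code_id: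
  assumes "locally_strict F" "code \<alpha> s = id" shows "stretch \<alpha> F s = F (anchor \<alpha> s)"
  using locally_strict_UN[OF assms(1), of "anchor \<alpha> s", symmetric]
  unfolding stretch_def assms(2) by simp

lemma stretch_Nil: "locally_strict F \<Longrightarrow> stretch \<alpha> F [] = F []"
  using stretch_code_id[of F \<alpha> "[]"] by simp

lemma stretch_subset_anchor: "locally_strict F \<Longrightarrow> stretch \<alpha> F s \<subseteq> F (anchor \<alpha> s)"
  unfolding stretch_def using locally_strict_UN by blast

lemma stretch_snoc_lift:
  assumes "locally_strict F" "length s \<in> range \<alpha>"
  shows "stretch \<alpha> F (s @ [c]) = F (anchor \<alpha> s @ [code \<alpha> s c])"
  using stretch_code_id[OF assms(1), of \<alpha> "s @ [c]"] assms(2) by (simp add: anchor_snoc code_snoc)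

lemma stretch_snoc_split:
  assumes "length s \<notin> range \<alpha>"
  shows "stretch \<alpha> F (s @ [c]) = (\<Union>a\<in>code \<alpha> s ` range (\<lambda>t. prod_encode (c, t)). F (anchor \<alpha> s @ [a]))"
  using assms unfolding stretch_def by (simp add: anchor_snoc code_snoc image_comp)

lemma UN_prod_encode_fibres: "(\<Union>c. range (\<lambda>t. prod_encode (c, t))) = UNIV"
proof -
  have "u \<in> range (\<lambda>t. prod_encode (fst (prod_decode u), t))" for u
    by (rule range_eqI[of _ _ "snd (prod_decode u)"]) simp
  then show ?thesis by blast
qed

lemma locally_strict_stretch:
  assumes "locally_strict F" shows "locally_strict (stretch \<alpha> F)"
  unfolding locally_strict_iff
proof (intro allI conjI impI)
  fix s a b :: "nat list"
  let ?x = "anchor \<alpha> s" and ?e = "code \<alpha> s" and ?R = "\<lambda>c. range (\<lambda>t. prod_encode (c, t))"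
  show "stretch \<alpha> F s = (\<Union>c. stretch \<alpha> F (s @ [c]))"
  proof (cases "length s \<in> range \<alpha>")
    case True
    show ?thesis unfolding stretch_snoc_lift[OF assms True] by (simp add: stretch_def image_image)
  next
    case False
    have "(\<Union>c. \<Union>a\<in>?e ` ?R c. F (?x @ [a])) = (\<Union>a\<in>?e ` (\<Union>c. ?R c). F (?x @ [a]))"
      by blast
    then show ?thesis
      unfolding stretch_snoc_split[OF False] by (simp add: UN_prod_encode_fibres stretch_def)
  qed
  fix a b :: nat assume "a \<noteq> b"
  then have "?e a \<noteq> ?e b" using inj_code by (metis injD)
  show "stretch \<alpha> F (s @ [a]) \<inter> stretch \<alpha> F (s @ [b]) = {}"
  proof (cases "length s \<in> range \<alpha>")
    case True
    show ?thesis
      unfolding stretch_snoc_lift[OF assms True] by (rule locally_strict_disjoint[OF assms \<open>?e a \<noteq> ?e b\<close>])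
  next
    case False
    have "?e ` ?R a \<inter> ?e ` ?R b = {}"
      using \<open>a \<noteq> b\<close> inj_code[of \<alpha> s] by (auto simp: inj_eq prod_encode_eq)
    then show ?thesis
      unfolding stretch_snoc_split[OF False] by (rule locally_strict_UN_disjoint[OF assms])
  qed
qed

lemma open_foliage_stretch: "open_foliage X F \<Longrightarrow> open_foliage X (stretch \<alpha> F)"
  unfolding open_foliage_def stretch_def by (intro allI openin_Union) auto

lemma strict_branches_stretch:
  fixes \<alpha> :: "nat \<Rightarrow> nat"
  assumes ls: "locally_strict F" and sb: "strict_branches F" and "strict_mono \<alpha>"
  shows "strict_branches (stretch \<alpha> F)"
  unfolding strict_branches_def
proof (intro allI impI)
  fix B assume "is_branch B"
  then obtain f where B: "B = range (\<lambda>m. map f [0..<m])" unfolding is_branch_iff_range_map by blast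
  \<comment> \<open>just below a lifting level the enumeration is reset, so there the stretched leaf is a leaf of \<open>F\<close>\<close>
  define lvl where "lvl m = (case m of 0 \<Rightarrow> 0 | Suc k \<Rightarrow> Suc (\<alpha> k))" for m
  define z where "z m = anchor \<alpha> (map f [0..<lvl m])" for m
  have snoc: "map f [0..<Suc (\<alpha> k)] = map f [0..<\<alpha> k] @ [f (\<alpha> k)]" for k by simp
  have code_id: "code \<alpha> (map f [0..<lvl m]) = id" for m
    by (cases m) (simp_all only: lvl_def nat.case snoc code_snoc, simp_all)
  have stretch_z: "stretch \<alpha> F (map f [0..<lvl m]) = F (z m)" for m
    unfolding z_def by (rule stretch_code_id[OF ls code_id])
  have len_z: "length (z m) = m" for m
    using length_anchor_lift_level[OF assms(3), of "map f [0..<\<alpha> k]" k for k]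
    by (cases m) (simp_all add: z_def lvl_def snoc anchor_snoc)
  have "lvl m \<le> lvl (Suc m)" for m
    using strict_mono_less_eq[OF assms(3)] by (cases m) (simp_all add: lvl_def)
  then have "prefix (z m) (z (Suc m))" for m unfolding z_def by (intro prefix_anchor prefix_map_upt)
  then have "z m = map (\<lambda>i. z (Suc i) ! i) [0..<m]" for m by (rule prefix_chain_eq_map[OF len_z])
  then have z_eq: "z = (\<lambda>m. map (\<lambda>i. z (Suc i) ! i) [0..<m])" by (rule ext)
  have "is_branch (range z)" by (subst z_eq) (rule is_branch_range_map)
  then have "\<exists>p. (\<Inter>x\<in>range z. F x) = {p}" using sb unfolding strict_branches_def by blast
  then obtain p where p: "(\<Inter>x\<in>range z. F x) = {p}" ..
  have "(\<Inter>x\<in>B. stretch \<alpha> F x) = (\<Inter>x\<in>range z. F x)"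
  proof (rule antisym)
    have "(\<Inter>x\<in>B. stretch \<alpha> F x) \<subseteq> stretch \<alpha> F (map f [0..<lvl m])" for m
      unfolding B by blast
    then show "(\<Inter>x\<in>B. stretch \<alpha> F x) \<subseteq> (\<Inter>x\<in>range z. F x)"
      unfolding stretch_z by blast
    have "m \<le> lvl m" for m
      using strict_mono_imp_increasing[OF assms(3)] by (cases m) (simp_all add: lvl_def)
    then have "F (z m) \<subseteq> stretch \<alpha> F (map f [0..<m])" for m
      unfolding stretch_z[symmetric]
      by (intro locally_strict_prefix_subset[OF locally_strict_stretch[OF ls]] prefix_map_upt)
    then show "(\<Inter>x\<in>range z. F x) \<subseteq> (\<Inter>x\<in>B. stretch \<alpha> F x)" unfolding B by blast
  qed
  then show "\<exists>p. (\<Inter>x\<in>B. stretch \<alpha> F x) = {p}" using p by (intro exI[of _ p]) simp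
qed

lemma rise_stretch:
  fixes \<alpha> :: "nat \<Rightarrow> nat"
  assumes ls: "locally_strict F" and sb: "strict_branches F" and "strict_mono \<alpha>"
  shows "\<alpha> ` rise F p U \<subseteq> rise (stretch \<alpha> F) p U"
proof
  fix k assume "k \<in> \<alpha> ` rise F p U"
  then obtain w where k: "k = \<alpha> (length w)" and "p \<in> F w" and shoot: "shoot F w \<ggreater> {U}"
    unfolding rise_def scope_def height_eq_length by blast
  have "p \<in> stretch \<alpha> F []"
    using \<open>p \<in> F w\<close> locally_strict_prefix_subset[OF ls, of "[]" w] stretch_Nil[OF ls] by auto
  then obtain s where s: "length s = \<alpha> (length w)" "p \<in> stretch \<alpha> F s"
    using locally_strict_exists_level[OF locally_strict_stretch[OF ls]] by blast
  have "anchor \<alpha> s = w"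
    using stretch_subset_anchor[OF ls] s length_anchor_lift_level[OF assms(3) s(1)]
    by (intro locally_strict_level_unique[OF ls _ \<open>p \<in> F w\<close>]) auto
  then have "stretch \<alpha> F (s @ [c]) = F (w @ [code \<alpha> s c])" for c
    using stretch_snoc_lift[OF ls] s(1) by simp
  then have "shoot (stretch \<alpha> F) s \<ggreater> {U}"
    by (rule refines_shoot_reindex[OF inj_code _ strict_branches_nonempty[OF sb] shoot])
  then show "k \<in> rise (stretch \<alpha> F) p U"
    unfolding rise_def scope_def height_eq_length using s k by (intro CollectI exI[of _ s]) simp
qed

theorem lemma14:
  fixes X :: "'a topology" and F :: "'a foliage" and \<alpha> :: "nat \<Rightarrow> nat"
  assumes "pi_tree X F" and "strict_mono \<alpha>"
  shows "\<exists>H. pi_tree X H \<and>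
           (\<forall>p\<in>topspace X. \<forall>U. nbhd X p U \<longrightarrow> \<alpha> ` rise F p U \<subseteq> rise H p U)"
proof -
  have op: "open_foliage X F" and ls: "locally_strict F" and sb: "strict_branches F"
    and root: "F [] = topspace X" and grows: "grows_into X F"
    using assms(1) unfolding pi_tree_def baire_foliage_tree_def by auto
  note rise = rise_stretch[OF ls sb assms(2)]
  have "baire_foliage_tree X (stretch \<alpha> F)"
    unfolding baire_foliage_tree_def
    using open_foliage_stretch[OF op] locally_strict_stretch[OF ls]
      strict_branches_stretch[OF ls sb assms(2)] stretch_Nil[OF ls] root by simp
  moreover have "grows_into X (stretch \<alpha> F)"
    using grows rise unfolding grows_into_iff_rise by blast
  ultimately show ?thesis unfolding pi_tree_def using rise by blast
qed

end
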